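(* Let $q\in\mathbb{C}^\times$ be not a root of unity, $n\ge2$, $\mathbf{Q}=(Q_1,\dots,Q_{n-1})\in\mathbb{C}^{n-1}$. Every one-dimensional $U_q(\mathfrak{sl}_n^{\langle\mathbf{Q}\rangle}[x])$-module is isomorphic to $\mathcal{D}^{\langle\mathbf{Q}\rangle}_{\boldsymbol\beta}$ for some $\boldsymbol\beta\in\mathbb{B}^{\langle\mathbf{Q}\rangle}$.
   Context: Let $I=\{1,\dots,n-1\}$, $(a_{ij})$ the Cartan matrix of type $A_{n-1}$, $[k]=(q^k-q^{-k})/(q-q^{-1})$, $[x,y]=xy-yx$. $U_q(\mathfrak{sl}_n^{\langle\mathbf{Q}\rangle}[x])$ is the $\mathbb{C}$-algebra with generators $X^{\pm}_{i,t},J_{i,t},K_i^{\pm}$ ($i\in I,t\ge0$) and relations: all $K_i^+$, $J_{j,t}$ pairwise commute; $K_i^+K_i^-=1=K_i^-K_i^+$; $(K_i^-)^2=1-(q-q^{-1})J_{i,0}$; $X^{\pm}_{i,t+1}X^{\pm}_{j,s}-q^{\pm a_{ij}}X^{\pm}_{j,s}X^{\pm}_{i,t+1}=q^{\pm a_{ij}}X^{\pm}_{i,t}X^{\pm}_{j,s+1}-X^{\pm}_{j,s+1}X^{\pm}_{i,t}$; $K_i^+X^{\pm}_{j,t}K_i^-=q^{\pm a_{ij}}X^{\pm}_{j,t}$; $q^{\pm a_{ij}}J_{i,0}X^{\pm}_{j,t}-q^{\mp a_{ij}}X^{\pm}_{j,t}J_{i,0}=[\pm a_{ij}]X^{\pm}_{j,t}$;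 $[J_{i,s+1},X^{\pm}_{j,t}]=q^{\pm a_{ij}}J_{i,s}X^{\pm}_{j,t+1}-q^{\mp a_{ij}}X^{\pm}_{j,t+1}J_{i,s}$; $[X^+_{i,t},X^-_{j,s}]=\delta_{ij}K_i^+(J_{i,s+t}-Q_iJ_{i,s+t+1})$; $[X^\pm_{i,t},X^\pm_{j,s}]=0$ if $j\ne i,i\pm1$; $X^{\pm}_{i\pm1,u}(X^{\pm}_{i,s}X^{\pm}_{i,t}+X^{\pm}_{i,t}X^{\pm}_{i,s})+(X^{\pm}_{i,s}X^{\pm}_{i,t}+X^{\pm}_{i,t}X^{\pm}_{i,s})X^{\pm}_{i\pm1,u}=(q+q^{-1})(X^{\pm}_{i,s}X^{\pm}_{i\pm1,u}X^{\pm}_{i,t}+X^{\pm}_{i,t}X^{\pm}_{i\pm1,u}X^{\pm}_{i,s})$. $\mathbb{B}^{\langle\mathbf{Q}\rangle}=\prod_{i\in I}\mathbb{B}^{\langle Q_i\rangle}$ with $\mathbb{B}^{\langle Q\rangle}=\{\pm1\}$ if $Q=0$ and $\mathbb{C}^\times$ if $Q\ne0$. For $\boldsymbol\beta=(\beta_i)\in\mathbb{B}^{\langle\mathbf{Q}\rangle}$, $\mathcal{D}^{\langle\mathbf{Q}\rangle}_{\boldsymbol\beta}=\mathbb{C}v$ is the one-dimensional module with $X^\pm_{i,t}v=0$, $K_i^\pm v=\beta_i^{\pm1}v$, and $J_{i,t}v=0$ if $Q_i=0$, $J_{i,t}v=\frac{1-\beta_i^{-2}}{q-q^{-1}}Q_i^{-t}v$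 if $Q_i\ne0$ ($i\in I$, $t\ge0$); this is a well-defined module. *)

theory Defs
  imports Complex_Main
begin

definition cartan :: "nat \<Rightarrow> nat \<Rightarrow> int" where
  "cartan i j = (if i = j then 2 else if j = i + 1 \<or> i = j + 1 then -1 else 0)"

definition qint :: "complex \<Rightarrow> int \<Rightarrow> complex" where
  "qint q k = (q powi k - q powi (-k)) / (q - inverse q)"

text \<open>X e i t is the action of X^+_{i,t} for e = 1 and of X^-_{i,t} for e = -1;
  J i t, Kp i, Km i are the actions of J_{i,t}, K_i^+, K_i^-.\<close>
definition is_Uq_module ::
  "complex \<Rightarrow> nat \<Rightarrow> (nat \<Rightarrow> complex) \<Rightarrow> (complex \<Rightarrow> 'v::ab_group_add \<Rightarrow> 'v)
   \<Rightarrow> (int \<Rightarrow> nat \<Rightarrow> nat \<Rightarrow> 'v \<Rightarrow> 'v) \<Rightarrow> (nat \<Rightarrow> nat \<Rightarrow> 'v \<Rightarrow> 'v)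
   \<Rightarrow> (nat \<Rightarrow> 'v \<Rightarrow> 'v) \<Rightarrow> (nat \<Rightarrow> 'v \<Rightarrow> 'v) \<Rightarrow> bool" where
  "is_Uq_module q n Q s X J Kp Km \<longleftrightarrow>
   (let I = {1..n-1}; S = {1, -1::int} in
    (\<forall>e\<in>S. \<forall>i\<in>I. \<forall>t. Vector_Spaces.linear s s (X e i t)) \<and>
    (\<forall>i\<in>I. \<forall>t. Vector_Spaces.linear s s (J i t)) \<and>
    (\<forall>i\<in>I. Vector_Spaces.linear s s (Kp i) \<and> Vector_Spaces.linear s s (Km i)) \<and>
    (\<forall>i\<in>I. \<forall>j\<in>I. \<forall>v. Kp i (Kp j v) = Kp j (Kp i v)) \<and>
    (\<forall>i\<in>I. \<forall>j\<in>I. \<forall>t v. Kp i (J j t v) = J j t (Kp i v)) \<and>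
    (\<forall>i\<in>I. \<forall>j\<in>I. \<forall>s' t v. J i s' (J j t v) = J j t (J i s' v)) \<and>
    (\<forall>i\<in>I. \<forall>v. Kp i (Km i v) = v \<and> Km i (Kp i v) = v) \<and>
    (\<forall>i\<in>I. \<forall>v. Km i (Km i v) = v - s (q - inverse q) (J i 0 v)) \<and>
    (\<forall>e\<in>S. \<forall>i\<in>I. \<forall>j\<in>I. \<forall>t u v.
        X e i (t+1) (X e j u v) - s (q powi (e * cartan i j)) (X e j u (X e i (t+1) v))
      = s (q powi (e * cartan i j)) (X e i t (X e j (u+1) v)) - X e j (u+1) (X e i t v)) \<and>
    (\<forall>e\<in>S. \<forall>i\<in>I. \<forall>j\<in>I. \<forall>t v.
        Kp i (X e j t (Km i v)) = s (q powi (e * cartan i j)) (X e j t v)) \<and>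
    (\<forall>e\<in>S. \<forall>i\<in>I. \<forall>j\<in>I. \<forall>t v.
        s (q powi (e * cartan i j)) (J i 0 (X e j t v)) - s (q powi (- e * cartan i j)) (X e j t (J i 0 v))
      = s (qint q (e * cartan i j)) (X e j t v)) \<and>
    (\<forall>e\<in>S. \<forall>i\<in>I. \<forall>j\<in>I. \<forall>u t v.
        J i (u+1) (X e j t v) - X e j t (J i (u+1) v)
      = s (q powi (e * cartan i j)) (J i u (X e j (t+1) v))
        - s (q powi (- e * cartan i j)) (X e j (t+1) (J i u v))) \<and>
    (\<forall>i\<in>I. \<forall>j\<in>I. \<forall>t u v.
        X 1 i t (X (-1) j u v) - X (-1) j u (X 1 i t v)
      = (if i = j then Kp i (J i (u+t) v - s (Q i) (J i (u+t+1) v)) else 0)) \<and>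
    (\<forall>e\<in>S. \<forall>i\<in>I. \<forall>j\<in>I. \<forall>t u v. j \<noteq> i \<and> j \<noteq> i + 1 \<and> j + 1 \<noteq> i \<longrightarrow>
        X e i t (X e j u v) = X e j u (X e i t v)) \<and>
    (\<forall>e\<in>S. \<forall>i\<in>I. \<forall>j\<in>I. \<forall>u t w v. (j = i + 1 \<or> j + 1 = i) \<longrightarrow>
        (let P = (\<lambda>x. X e i u (X e i t x) + X e i t (X e i u x)) in
         X e j w (P v) + P (X e j w v)
       = s (q + inverse q) (X e i u (X e j w (X e i t v)) + X e i t (X e j w (X e i u v))))))"

definition in_BQ :: "nat \<Rightarrow> (nat \<Rightarrow> complex) \<Rightarrow> (nat \<Rightarrow> complex) \<Rightarrow> bool" where
  "in_BQ n Q \<beta> \<longleftrightarrow> (\<forall>i\<in>{1..n-1}. if Q i = 0 then \<beta> i \<in> {1, -1} else \<beta> i \<noteq> 0)"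

text \<open>The scalar by which J_{i,t} acts on D_beta.\<close>
definition D_J :: "complex \<Rightarrow> (nat \<Rightarrow> complex) \<Rightarrow> (nat \<Rightarrow> complex) \<Rightarrow> nat \<Rightarrow> nat \<Rightarrow> complex" where
  "D_J q Q \<beta> i t = (if Q i = 0 then 0
      else (1 - inverse (\<beta> i ^ 2)) / (q - inverse q) * inverse (Q i ^ t))"

text \<open>('v, s) with the given action is isomorphic to D_beta = C (with scalar action):
  a bijective C-linear intertwiner to C.\<close>
definition iso_to_D ::
  "complex \<Rightarrow> nat \<Rightarrow> (nat \<Rightarrow> complex) \<Rightarrow> (complex \<Rightarrow> 'v::ab_group_add \<Rightarrow> 'v)
   \<Rightarrow> (int \<Rightarrow> nat \<Rightarrow> nat \<Rightarrow> 'v \<Rightarrow> 'v) \<Rightarrow> (nat \<Rightarrow> nat \<Rightarrow> 'v \<Rightarrow> 'v)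
   \<Rightarrow> (nat \<Rightarrow> 'v \<Rightarrow> 'v) \<Rightarrow> (nat \<Rightarrow> 'v \<Rightarrow> 'v) \<Rightarrow> (nat \<Rightarrow> complex) \<Rightarrow> bool" where
  "iso_to_D q n Q s X J Kp Km \<beta> \<longleftrightarrow>
   (\<exists>\<phi> :: 'v \<Rightarrow> complex. Vector_Spaces.linear s (*) \<phi> \<and> bij \<phi> \<and>
     (\<forall>i\<in>{1..n-1}. \<forall>v.
        (\<forall>e\<in>{1,-1::int}. \<forall>t. \<phi> (X e i t v) = 0) \<and>
        \<phi> (Kp i v) = \<beta> i * \<phi> v \<and>
        \<phi> (Km i v) = inverse (\<beta> i) * \<phi> v \<and>
        (\<forall>t. \<phi> (J i t v) = D_J q Q \<beta> i t * \<phi> v)))"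

end

(* In a one-dimensional module every generator acts by a scalar, so the defining relations
   become identities between complex numbers.  For i = j the relation between J_{i,0} and
   X^{+-}_{i,t} shows that a nonzero scalar for X^{+-}_{i,t} would force J_{i,0} to act by
   1/(q - q^-1); then (K_i^-)^2 = 1 - (q - q^-1) J_{i,0} would act by 0, although K_i^- is
   invertible.  Hence every X^{+-}_{i,t} acts by 0, and the commutator [X^+_{i,0}, X^-_{i,u}]
   yields J_{i,u} = Q_i J_{i,u+1}.  Together with the value of J_{i,0} read off from (K_i^-)^2,
   this determines every J_{i,t} from the eigenvalue beta_i of K_i^+, and for Q_i = 0 it gives
   J_{i,0} = 0, i.e. beta_i^2 = 1. *)

theory Submission
  imports Defs
begin

lemma one_dim_coordinate_exists:
  fixes s :: "'a::field \<Rightarrow> 'v::ab_group_add \<Rightarrow> 'v"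
  assumes "vector_space s" and "vector_space.dim s (UNIV :: 'v set) = 1"
  obtains coord :: "'v \<Rightarrow> 'a" and b
  where "Vector_Spaces.linear s (*) coord" "coord b = 1" "\<And>v. v = s (coord v) b"
proof -
  interpret vector_space s by fact
  obtain B where B: "independent B" "UNIV \<subseteq> span B" "card B = dim (UNIV :: 'v set)"
    using basis_exists[of UNIV] by blast
  with assms(2) have "card B = 1"
    by simp
  then obtain b where "B = {b}"
    by (rule card_1_singletonE)
  with B have indep: "independent {b}" and span: "span {b} = UNIV"
    by auto
  show ?thesis
  proof
    show "Vector_Spaces.linear s (*) (\<lambda>v. representation {b} v b)"
      using linear_representation[OF indep span] .
    show "representation {b} b b = 1"
      using representation_basis[OF indep] by simp
    show "v = s (representation {b} v b) b" for v
      using sum_representation_eq[OF indep, of v "{b}"] span by simp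
  qed
qed

locale one_dim_coordinate =
  fixes s :: "'a::field \<Rightarrow> 'v::ab_group_add \<Rightarrow> 'v" and coord :: "'v \<Rightarrow> 'a" and b :: 'v
  assumes linear_coord: "Vector_Spaces.linear s (*) coord"
    and coord_basis: "coord b = 1"
    and coord_decomp: "\<And>v. v = s (coord v) b"
begin

sublocale coord: Vector_Spaces.linear s "(*)" coord
  by (rule linear_coord)

lemma coord_apply:
  assumes "Vector_Spaces.linear s s f"
  shows "coord (f v) = coord (f b) * coord v"
proof -
  interpret f: Vector_Spaces.linear s s f by fact
  have "f v = f (s (coord v) b)"
    by (rule arg_cong[where f = f], rule coord_decomp)
  also have "\<dots> = s (coord v) (f b)"
    by (rule f.scale)
  finally show ?thesis
    by (simp add: coord.scale mult.commute)
qed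

lemma bij_coord: "bij coord"
proof (rule bijI)
  show "inj coord"
  proof (rule injI)
    fix v w
    assume "coord v = coord w"
    then show "v = w"
      using coord_decomp[of v] coord_decomp[of w] by simp
  qed
  show "surj coord"
    by (rule surjI[where f = "\<lambda>c. s c b"]) (simp add: coord.scale coord_basis)
qed

end

lemma powi_double_neq_powi_neg:
  fixes q :: "'a::field"
  assumes "q \<noteq> 0" and "q ^ 4 \<noteq> 1" and "e \<in> {1, -1}"
  shows "q powi (2 * e) \<noteq> q powi (- (2 * e))"
proof
  assume "q powi (2 * e) = q powi (- (2 * e))"
  then have "q ^ 2 = inverse (q ^ 2)"
    using assms(3) by (auto simp: power_int_minus)
  then have "q ^ 2 * q ^ 2 = 1"
    using assms(1) by (simp add: field_simps)
  with assms(2) show False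
    by (simp flip: power_add)
qed

lemma q_minus_inverse_nonzero:
  fixes q :: "'a::field"
  assumes "q \<noteq> 0" and "q ^ 4 \<noteq> 1"
  shows "q - inverse q \<noteq> 0"
proof
  assume "q - inverse q = 0"
  then have "q * q = 1"
    using assms(1) by (simp add: field_simps)
  then have "q ^ 4 = 1"
    by (metis power2_eq_square power_mult one_power2 numeral_Bit0 mult_2_right)
  with assms(2) show False ..
qed

lemma qint_relation_forces_zero:
  fixes q j x k :: complex
  assumes J0: "(q - inverse q) * j = 1 - inverse (k ^ 2)" and "k \<noteq> 0"
    and rel: "(q powi c - q powi (- c)) * j * x = qint q c * x"
    and "q powi c \<noteq> q powi (- c)" and "q - inverse q \<noteq> 0"
  shows "x = 0"
proof (rule ccontr)
  assume "x \<noteq> 0"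
  with rel have "(q powi c - q powi (- c)) * j = qint q c"
    by simp
  then have "(q powi c - q powi (- c)) * j = (q powi c - q powi (- c)) / (q - inverse q)"
    unfolding qint_def .
  with assms(4) have "j = inverse (q - inverse q)"
    by (simp add: divide_inverse)
  with assms(5) have "(q - inverse q) * j = 1"
    by simp
  with J0 have "inverse (k ^ 2) = 0"
    by simp
  with \<open>k \<noteq> 0\<close> show False
    by simp
qed

lemma D_J_eqI:
  fixes j :: "nat \<Rightarrow> complex"
  assumes shift: "\<And>u. j u = Q i * j (Suc u)"
    and init: "(q - inverse q) * j 0 = 1 - inverse (\<beta> i ^ 2)" and "q - inverse q \<noteq> 0"
  shows "j t = D_J q Q \<beta> i t"
proof (cases "Q i = 0")
  case True
  then show ?thesis
    using shift[of t] by (simp add: D_J_def)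
next
  case False
  show ?thesis
  proof (induction t)
    case 0
    show ?case
      using False init assms(3) by (simp add: D_J_def field_simps)
  next
    case (Suc t)
    have "j (Suc t) = j t / Q i"
      using shift[of t] False by (simp add: field_simps)
    with Suc False show ?case
      by (simp add: D_J_def field_simps)
  qed
qed

lemma
  assumes "is_Uq_module q n Q s X J Kp Km"
  shows is_Uq_module_linear_X: "\<forall>e\<in>{1, -1::int}. \<forall>i\<in>{1..n-1}. \<forall>t. Vector_Spaces.linear s s (X e i t)"
    and is_Uq_module_linear_J: "\<forall>i\<in>{1..n-1}. \<forall>t. Vector_Spaces.linear s s (J i t)"
    and is_Uq_module_linear_K:
      "\<forall>i\<in>{1..n-1}. Vector_Spaces.linear s s (Kp i) \<and> Vector_Spaces.linear s s (Km i)"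
    and is_Uq_module_K_inverse: "\<forall>i\<in>{1..n-1}. \<forall>v. Kp i (Km i v) = v \<and> Km i (Kp i v) = v"
    and is_Uq_module_Km_square:
      "\<forall>i\<in>{1..n-1}. \<forall>v. Km i (Km i v) = v - s (q - inverse q) (J i 0 v)"
    and is_Uq_module_J0_X: "\<forall>e\<in>{1, -1}. \<forall>i\<in>{1..n-1}. \<forall>j\<in>{1..n-1}. \<forall>t v.
        s (q powi (e * cartan i j)) (J i 0 (X e j t v)) - s (q powi (- e * cartan i j)) (X e j t (J i 0 v))
      = s (qint q (e * cartan i j)) (X e j t v)"
    and is_Uq_module_X_commutator: "\<forall>i\<in>{1..n-1}. \<forall>j\<in>{1..n-1}. \<forall>t u v.
        X 1 i t (X (-1) j u v) - X (-1) j u (X 1 i t v)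
      = (if i = j then Kp i (J i (u+t) v - s (Q i) (J i (u+t+1) v)) else 0)"
  by (insert assms, unfold is_Uq_module_def Let_def, (elim conjE, assumption)+)

locale one_dim_Uq_module = one_dim_coordinate s coord b
  for s :: "complex \<Rightarrow> 'v::ab_group_add \<Rightarrow> 'v" and coord b +
  fixes q :: complex and n :: nat and Q :: "nat \<Rightarrow> complex"
    and X :: "int \<Rightarrow> nat \<Rightarrow> nat \<Rightarrow> 'v \<Rightarrow> 'v" and J :: "nat \<Rightarrow> nat \<Rightarrow> 'v \<Rightarrow> 'v"
    and Kp Km :: "nat \<Rightarrow> 'v \<Rightarrow> 'v"
  assumes q_nonzero: "q \<noteq> 0" and q_pow4: "q ^ 4 \<noteq> 1"
    and module: "is_Uq_module q n Q s X J Kp Km"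
begin

definition weight :: "nat \<Rightarrow> complex"
  where "weight i = coord (Kp i b)"

context
  fixes i assumes i: "i \<in> {1..n-1}"
begin

lemma linear_X: "e \<in> {1, -1} \<Longrightarrow> Vector_Spaces.linear s s (X e i t)"
  using is_Uq_module_linear_X[OF module] i by blast

lemma linear_J: "Vector_Spaces.linear s s (J i t)"
  using is_Uq_module_linear_J[OF module] i by blast

lemma linear_Kp: "Vector_Spaces.linear s s (Kp i)"
  using is_Uq_module_linear_K[OF module] i by blast

lemma linear_Km: "Vector_Spaces.linear s s (Km i)"
  using is_Uq_module_linear_K[OF module] i by blast

lemma Kp_Km: "Kp i (Km i v) = v"
  using is_Uq_module_K_inverse[OF module] i by blast

lemma Km_Km: "Km i (Km i v) = v - s (q - inverse q) (J i 0 v)"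
  using is_Uq_module_Km_square[OF module] i by blast

lemma J0_X:
  assumes "e \<in> {1, -1}"
  shows "s (q powi (2 * e)) (J i 0 (X e i t v)) - s (q powi (- (2 * e))) (X e i t (J i 0 v))
    = s (qint q (2 * e)) (X e i t v)"
  using is_Uq_module_J0_X[OF module, rule_format, OF assms i i, of t v]
  by (simp add: cartan_def mult.commute)

lemma X_commutator:
  "X 1 i t (X (-1) i u v) - X (-1) i u (X 1 i t v) = Kp i (J i (u + t) v - s (Q i) (J i (u + t + 1) v))"
  using is_Uq_module_X_commutator[OF module] i by simp

lemma coord_Kp: "coord (Kp i v) = weight i * coord v"
  unfolding weight_def by (rule coord_apply[OF linear_Kp])

lemma weight_mult_Km: "weight i * coord (Km i b) = 1"
  using coord_Kp[of "Km i b"] Kp_Km[of b] coord_basis by simp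

lemma weight_nonzero: "weight i \<noteq> 0"
  using weight_mult_Km by auto

lemma coord_Km: "coord (Km i v) = inverse (weight i) * coord v"
proof -
  have "coord (Km i b) = inverse (weight i)"
    using inverse_unique[OF weight_mult_Km] by simp
  then show ?thesis
    using coord_apply[OF linear_Km, of v] by simp
qed

lemma coord_J0: "(q - inverse q) * coord (J i 0 b) = 1 - inverse (weight i ^ 2)"
proof -
  have "coord (Km i (Km i b)) = 1 - (q - inverse q) * coord (J i 0 b)"
    using Km_Km[of b] coord_basis by (simp add: coord.diff coord.scale)
  moreover have "coord (Km i (Km i b)) = inverse (weight i ^ 2)"
    using coord_Km coord_basis by (simp add: power2_eq_square)
  ultimately show ?thesis
    by simp
qed

lemma coord_X: "e \<in> {1, -1} \<Longrightarrow> coord (X e i t v) = 0"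
proof -
  assume e: "e \<in> {1, -1}"
  let ?x = "coord (X e i t b)" and ?j = "coord (J i 0 b)"
  have "q powi (2 * e) * (?j * ?x) - q powi (- (2 * e)) * (?x * ?j) = qint q (2 * e) * ?x"
    using arg_cong[OF J0_X[OF e, of t b], of coord]
    by (simp add: coord.diff coord.scale coord_apply[OF linear_J[of 0], of "X e i t b"]
        coord_apply[OF linear_X[OF e, of t], of "J i 0 b"])
  then have "(q powi (2 * e) - q powi (- (2 * e))) * ?j * ?x = qint q (2 * e) * ?x"
    by (simp only: left_diff_distrib right_diff_distrib mult_ac)
  then have "?x = 0"
    by (rule qint_relation_forces_zero[OF coord_J0 weight_nonzero _
          powi_double_neq_powi_neg[OF q_nonzero q_pow4 e]
          q_minus_inverse_nonzero[OF q_nonzero q_pow4]])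
  then show ?thesis
    using coord_apply[OF linear_X[OF e, of t], of v] by simp
qed

lemma coord_J_shift: "coord (J i u b) = Q i * coord (J i (Suc u) b)"
proof -
  have "0 = coord (X 1 i 0 (X (-1) i u b) - X (-1) i u (X 1 i 0 b))"
    by (simp add: coord.diff coord_X)
  also have "\<dots> = weight i * (coord (J i u b) - Q i * coord (J i (Suc u) b))"
    by (simp add: X_commutator coord_Kp coord.diff coord.scale)
  finally show ?thesis
    using weight_nonzero by simp
qed

lemma coord_J: "coord (J i t v) = D_J q Q weight i t * coord v"
  using coord_apply[OF linear_J[of t], of v]
    D_J_eqI[where j = "\<lambda>u. coord (J i u b)" and Q = Q and i = i and \<beta> = weight, OF coord_J_shift coord_J0
      q_minus_inverse_nonzero[OF q_nonzero q_pow4]]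
  by simp

lemma weight_in_plus_minus_one: "Q i = 0 \<Longrightarrow> weight i \<in> {1, -1}"
proof -
  assume "Q i = 0"
  then have "inverse (weight i ^ 2) = 1"
    using coord_J0 coord_J_shift[of 0] by simp
  then have "weight i ^ 2 = 1"
    by (metis inverse_1 inverse_inverse_eq)
  then show ?thesis
    by (simp add: power2_eq_1_iff)
qed

end

lemma in_BQ_weight: "in_BQ n Q weight"
  unfolding in_BQ_def using weight_in_plus_minus_one weight_nonzero by simp

lemma iso_to_D_weight: "iso_to_D q n Q s X J Kp Km weight"
  unfolding iso_to_D_def
  by (intro exI[of _ coord] conjI linear_coord bij_coord ballI allI)
    (simp_all add: coord_X coord_Kp coord_Km coord_J)

end

theorem mainTheorem12:
  fixes q :: complex and n :: nat and Q :: "nat \<Rightarrow> complex"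
    and s :: "complex \<Rightarrow> 'v::ab_group_add \<Rightarrow> 'v"
    and X :: "int \<Rightarrow> nat \<Rightarrow> nat \<Rightarrow> 'v \<Rightarrow> 'v" and J :: "nat \<Rightarrow> nat \<Rightarrow> 'v \<Rightarrow> 'v"
    and Kp Km :: "nat \<Rightarrow> 'v \<Rightarrow> 'v"
  assumes "q \<noteq> 0" and "\<forall>m::nat. m > 0 \<longrightarrow> q ^ m \<noteq> 1" and "n \<ge> 2"
    and "vector_space s" and "vector_space.dim s (UNIV :: 'v set) = 1"
    and "is_Uq_module q n Q s X J Kp Km"
  shows "\<exists>\<beta>. in_BQ n Q \<beta> \<and> iso_to_D q n Q s X J Kp Km \<beta>"
proof -
  obtain coord :: "'v \<Rightarrow> complex" and b
    where "Vector_Spaces.linear s (*) coord" "coord b = 1" "\<And>v. v = s (coord v) b"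
    using one_dim_coordinate_exists[OF assms(4,5)] by blast
  moreover have "q ^ 4 \<noteq> 1"
    using assms(2) by simp
  ultimately interpret one_dim_Uq_module s coord b q n Q X J Kp Km
    using assms(1,6)
    by (simp add: one_dim_Uq_module_def one_dim_coordinate_def one_dim_Uq_module_axioms_def)
  show ?thesis
    using in_BQ_weight iso_to_D_weight by blast
qed

end
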